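(* Let $\mathcal N=\mathcal N(x)$ be a nowhere vanishing function on $S$ (lifted to $T^*S$). Then $\mathcal N$ is a conformal factor for the almost symplectic form $\Omega+\sigma+\rho^*\mathbf f$ on $T^*S$ (i.e. $d(\mathcal N(\Omega+\sigma+\rho^*\mathbf f))=0$) if and only if $\mathcal N$ is a conformal factor for the almost symplectic form $\Omega+\sigma$ (i.e. $d(\mathcal N(\Omega+\sigma))=0$) and the two-form $\mathbf f^*=\mathcal N\mathbf f$ on $S$ is closed.
   Context: Setting: $S$ ($\dim S=n$) is the base of a gyroscopic $G$–Chaplygin system: $G$ acts freely on $Q$, $\pi\colon Q\to S=Q/G$, $L=\frac12\mathbf G(\dot q,\dot q)-V$ with $G$-invariant $\mathbf G,V$, $\mathbf F$ a $G$-invariant two-form on $Q$, $\mathcal D$ a $G$-invariant distribution complementary to $\ker d\pi$. Reduced data on $S$: metric $\mathbf g(X,Y)=\mathbf G(X^h,Y^h)$, two-form $\mathbf f(X,Y)=\mathbf F(X^h,Y^h)$ ($X^h\in\mathcal D$ horizontal lift), $\Sigma(X,Y,Z)=\mathbf G(X^h,B(Y^h,Z^h))$ where $B(X,Y)=-A([X^h,Y^h])$ is the curvature of $\mathcal D$, and the skew $(1,2)$-tensor $\mathbf C$ with $\Sigma(X,Y,Z)=\mathbf g(X,\mathbf C(Y,Z))$, locally $\mathbf C(\partial_i,\partial_j)=\sum_kC^k_{ij}\partial_k$. On $T^*S$ with canonical coordinates $(x,p)$: $\Omega=\sum_idp_i\wedge dx_i$, $\sigma=\sum_{1\le i<j\le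 n}\sum_kC^k_{ij}(x)p_k\,dx_i\wedge dx_j$, and $\rho\colon T^*S\to S$ is the projection. An almost symplectic form is a nondegenerate (not necessarily closed) two-form. *)

theory Defs
  imports "HOL-Analysis.Analysis"
begin

text \<open>A chart of S is an open set U of real^'n (coordinates x);
 T*S over it is U \<times> UNIV in (real^'n) \<times> (real^'n) (coordinates (x,p)).
 Coordinates on T*S are indexed by 'n + 'n: Inl i is x_i, Inr i is p_i.
 A two-form is given by its (antisymmetric) component functions
 w z a b = w(e_a, e_b), i.e. w = sum over a<b of w z a b dz_a wedge dz_b.\<close>

definition pderiv :: "('a::real_normed_vector \<Rightarrow> real) \<Rightarrow> 'a \<Rightarrow> 'a \<Rightarrow> real" where
  "pderiv g z v = frechet_derivative g (at z) v"

definition closed_form2 ::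
  "'a::real_normed_vector set \<Rightarrow> ('i \<Rightarrow> 'a) \<Rightarrow> ('a \<Rightarrow> 'i \<Rightarrow> 'i \<Rightarrow> real) \<Rightarrow> bool" where
  "closed_form2 W e w \<longleftrightarrow>
     (\<forall>z\<in>W. \<forall>a b c. pderiv (\<lambda>y. w y b c) z (e a) + pderiv (\<lambda>y. w y c a) z (e b)
                     + pderiv (\<lambda>y. w y a b) z (e c) = 0)"

definition xbasis :: "'n::finite \<Rightarrow> real^'n" where
  "xbasis i = axis i 1"

definition cbasis :: "'n::finite + 'n \<Rightarrow> (real^'n) \<times> (real^'n)" where
  "cbasis a = (case a of Inl i \<Rightarrow> (axis i 1, 0) | Inr i \<Rightarrow> (0, axis i 1))"

definition Omega :: "'n + 'n \<Rightarrow> 'n + 'n \<Rightarrow> real" where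
  "Omega a b = (case (a, b) of
      (Inr i, Inl j) \<Rightarrow> (if i = j then 1 else 0)
    | (Inl i, Inr j) \<Rightarrow> (if i = j then -1 else 0)
    | _ \<Rightarrow> 0)"

text \<open>sigma = sum_{i<j} sum_k C^k_ij(x) p_k dx_i wedge dx_j, with C k i j x = C^k_ij(x)
 skew in i j.\<close>
definition sigma :: "('n::finite \<Rightarrow> 'n \<Rightarrow> 'n \<Rightarrow> real^'n \<Rightarrow> real)
     \<Rightarrow> (real^'n) \<times> (real^'n) \<Rightarrow> 'n + 'n \<Rightarrow> 'n + 'n \<Rightarrow> real" where
  "sigma C z a b = (case (a, b) of
      (Inl i, Inl j) \<Rightarrow> (\<Sum>k\<in>UNIV. C k i j (fst z) * (snd z $ k))
    | _ \<Rightarrow> 0)"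

definition pullf :: "('n \<Rightarrow> 'n \<Rightarrow> real^'n \<Rightarrow> real)
     \<Rightarrow> (real^'n) \<times> (real^'n) \<Rightarrow> 'n + 'n \<Rightarrow> 'n + 'n \<Rightarrow> real" where
  "pullf f z a b = (case (a, b) of
      (Inl i, Inl j) \<Rightarrow> f i j (fst z)
    | _ \<Rightarrow> 0)"

end

theory Submission imports Defs begin

text \<open>Write \<open>w\<^sub>0 = N(\<Omega> + \<sigma>)\<close> and \<open>f\<^sup>* = N f\<close>, so that \<open>N(\<Omega> + \<sigma> + \<rho>\<^sup>*f) = w\<^sub>0 + \<rho>\<^sup>*f\<^sup>*\<close>
  and \<open>d(N(\<Omega> + \<sigma> + \<rho>\<^sup>*f)) = dw\<^sub>0 + \<rho>\<^sup>*(df\<^sup>*)\<close>. The pullback \<open>\<rho>\<^sup>*(df\<^sup>*)\<close> only has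
  \<open>dx dx dx\<close>-components, and those of \<open>dw\<^sub>0\<close> vanish on the zero section \<open>p = 0\<close>, because
  the \<open>dx dx\<close>-components \<open>N \<Sum>\<^sub>k C\<^sup>k\<^sub>i\<^sub>j p\<^sub>k\<close> of \<open>w\<^sub>0\<close> vanish identically there. Hence
  closedness of \<open>w\<^sub>0 + \<rho>\<^sup>*f\<^sup>*\<close> forces \<open>df\<^sup>* = 0\<close>, after which it is equivalent to closedness
  of \<open>w\<^sub>0\<close>.\<close>

definition ext_deriv2 ::
  "('i \<Rightarrow> 'a::real_normed_vector) \<Rightarrow> ('a \<Rightarrow> 'i \<Rightarrow> 'i \<Rightarrow> real) \<Rightarrow> 'a \<Rightarrow> 'i \<Rightarrow> 'i \<Rightarrow> 'i \<Rightarrow> real"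
where
  "ext_deriv2 e w z a b c = pderiv (\<lambda>y. w y b c) z (e a) + pderiv (\<lambda>y. w y c a) z (e b)
     + pderiv (\<lambda>y. w y a b) z (e c)"

lemma closed_form2_iff_ext_deriv2:
  "closed_form2 W e w \<longleftrightarrow> (\<forall>z\<in>W. \<forall>a b c. ext_deriv2 e w z a b c = 0)"
  by (simp add: closed_form2_def ext_deriv2_def)

lemma pderiv_add:
  assumes "g differentiable (at z)" "h differentiable (at z)"
  shows "pderiv (\<lambda>y. g y + h y) z v = pderiv g z v + pderiv h z v"
proof -
  obtain g' where g: "(g has_derivative g') (at z)" using assms(1) differentiable_def by blast
  obtain h' where h: "(h has_derivative h') (at z)" using assms(2) differentiable_def by blast
  show ?thesis unfolding pderiv_def
    using has_derivative_add[OF g h] by (metis frechet_derivative_at g h)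
qed

lemma pderiv_comp_fst:
  assumes "G differentiable (at (fst z))"
  shows "pderiv (\<lambda>y. G (fst y)) z v = pderiv G (fst z) (fst v)"
proof -
  obtain G' where G: "(G has_derivative G') (at (fst z))" using assms differentiable_def by blast
  have "((\<lambda>y. G (fst y)) has_derivative (\<lambda>v. G' (fst v))) (at z)"
    using diff_chain_at[OF has_derivative_fst[OF has_derivative_ident] G] by (simp add: o_def)
  then show ?thesis unfolding pderiv_def by (metis frechet_derivative_at G)
qed

lemma pderiv_zero_direction:
  assumes "g differentiable (at z)"
  shows "pderiv g z 0 = 0"
  using assms frechet_derivative_works has_derivative_linear linear_0
  unfolding pderiv_def by blast

lemma pderiv_eq_0_if_constant_on_line:
  fixes g :: "'a::real_normed_vector \<Rightarrow> real"
  assumes "g differentiable (at z)" and "\<And>t. g (z + t *\<^sub>R v) = g z"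
  shows "pderiv g z v = 0"
proof -
  obtain g' where g: "(g has_derivative g') (at z)" using assms(1) differentiable_def by blast
  have line: "((\<lambda>t::real. z + t *\<^sub>R v) has_derivative (\<lambda>t. t *\<^sub>R v)) (at 0)"
    by (auto intro!: derivative_eq_intros)
  have "((\<lambda>t::real. g (z + t *\<^sub>R v)) has_derivative (\<lambda>t. g' (t *\<^sub>R v))) (at 0)"
    using diff_chain_at[OF line] g by (simp add: o_def)
  moreover have "((\<lambda>t::real. g (z + t *\<^sub>R v)) has_derivative (\<lambda>t. 0)) (at 0)"
    using assms(2) by simp
  ultimately have "(\<lambda>t. g' (t *\<^sub>R v)) = (\<lambda>t. 0)" by (rule has_derivative_unique)
  then have "g' v = 0" by (metis scaleR_one)
  then show ?thesis unfolding pderiv_def by (metis frechet_derivative_at g)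
qed

lemma differentiable_comp_fst:
  assumes "G differentiable (at (fst z))"
  shows "(\<lambda>y. G (fst y)) differentiable (at z)"
proof -
  have "fst differentiable (at z)"
    by (rule bounded_linear_imp_differentiable[OF bounded_linear_fst])
  then show ?thesis using differentiable_compose[of G fst z UNIV] assms by simp
qed

lemma differentiable_snd_nth:
  "(\<lambda>y::'a::real_normed_vector \<times> (real^'n). snd y $ k) differentiable (at z)"
  by (rule bounded_linear_imp_differentiable)
    (simp add: bounded_linear_compose[OF bounded_linear_vec_nth bounded_linear_snd])

lemma ext_deriv2_add:
  assumes "\<And>a b. (\<lambda>y. w y a b) differentiable (at z)" "\<And>a b. (\<lambda>y. w' y a b) differentiable (at z)"
  shows "ext_deriv2 e (\<lambda>y a b. w y a b + w' y a b) z a b c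
    = ext_deriv2 e w z a b c + ext_deriv2 e w' z a b c"
  unfolding ext_deriv2_def using pderiv_add[OF assms] by simp

lemma closed_form2_add_closed:
  assumes "\<And>z a b. z \<in> W \<Longrightarrow> (\<lambda>y. w y a b) differentiable (at z)"
    and "\<And>z a b. z \<in> W \<Longrightarrow> (\<lambda>y. w' y a b) differentiable (at z)"
    and "closed_form2 W e w'"
  shows "closed_form2 W e (\<lambda>z a b. w z a b + w' z a b) \<longleftrightarrow> closed_form2 W e w"
  using assms by (simp add: closed_form2_iff_ext_deriv2 ext_deriv2_add)

lemma differentiable_pullf:
  assumes "\<And>i j. F i j differentiable (at (fst z))"
  shows "(\<lambda>y. pullf F y a b) differentiable (at z)"
  using assms by (cases a; cases b) (auto simp: pullf_def intro: differentiable_comp_fst)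

lemma pderiv_pullf:
  assumes "\<And>i j. F i j differentiable (at (fst z))"
  shows "pderiv (\<lambda>y. pullf F y b c) z v
    = (case (b, c) of (Inl j, Inl k) \<Rightarrow> pderiv (F j k) (fst z) (fst v) | _ \<Rightarrow> 0)"
proof (cases b; cases c)
  fix j k assume "b = Inl j" "c = Inl k"
  then show ?thesis using pderiv_comp_fst[of "F j k" z v] assms by (simp add: pullf_def)
qed (simp_all add: pullf_def pderiv_def)

lemma ext_deriv2_pullf_Inl:
  assumes "\<And>i j. F i j differentiable (at (fst z))"
  shows "ext_deriv2 cbasis (pullf F) z (Inl i) (Inl j) (Inl k)
    = ext_deriv2 xbasis (\<lambda>x i j. F i j x) (fst z) i j k"
  using assms by (simp add: ext_deriv2_def pderiv_pullf cbasis_def xbasis_def)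

lemma ext_deriv2_pullf_Inr:
  assumes "\<And>i j. F i j differentiable (at (fst z))" and "Inr l \<in> {a, b, c}"
  shows "ext_deriv2 cbasis (pullf F) z a b c = 0"
  using assms
  by (cases a; cases b; cases c)
    (auto simp: ext_deriv2_def pderiv_pullf cbasis_def pderiv_zero_direction)

lemma closed_form2_pullf_iff:
  assumes "\<And>i j x. x \<in> U \<Longrightarrow> F i j differentiable (at x)"
  shows "closed_form2 (U \<times> UNIV) cbasis (pullf F) \<longleftrightarrow> closed_form2 U xbasis (\<lambda>x i j. F i j x)"
proof
  assume closed: "closed_form2 (U \<times> UNIV) cbasis (pullf F)"
  have "ext_deriv2 xbasis (\<lambda>x i j. F i j x) x i j k = 0" if "x \<in> U" for x i j k
    using ext_deriv2_pullf_Inl[of F "(x, 0)" i j k] that assms closed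
    by (simp add: closed_form2_iff_ext_deriv2)
  then show "closed_form2 U xbasis (\<lambda>x i j. F i j x)"
    by (simp add: closed_form2_iff_ext_deriv2)
next
  assume closed: "closed_form2 U xbasis (\<lambda>x i j. F i j x)"
  have "ext_deriv2 cbasis (pullf F) z a b c = 0" if "z \<in> U \<times> UNIV" for z a b c
    using that closed assms ext_deriv2_pullf_Inl[of F z]
    by (cases a; cases b; cases c)
      (auto simp: closed_form2_iff_ext_deriv2 mem_Times_iff intro!: ext_deriv2_pullf_Inr)
  then show "closed_form2 (U \<times> UNIV) cbasis (pullf F)"
    by (simp add: closed_form2_iff_ext_deriv2)
qed

lemma differentiable_conformal_Omega_sigma:
  assumes "N differentiable (at (fst z))" and "\<And>k i j. C k i j differentiable (at (fst z))"
  shows "(\<lambda>y. N (fst y) * (Omega a b + sigma C y a b)) differentiable (at z)"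
proof (cases a; cases b)
  fix i j assume "a = Inl i" "b = Inl j"
  then show ?thesis
    by (simp add: Omega_def sigma_def)
      (intro differentiable_mult differentiable_sum ballI differentiable_snd_nth
        differentiable_comp_fst assms, simp)
qed (auto simp: Omega_def sigma_def intro!: differentiable_mult differentiable_comp_fst assms)

lemma ext_deriv2_conformal_Omega_sigma_zero_section:
  assumes "N differentiable (at x)" and "\<And>k i j. C k i j differentiable (at x)"
  shows "ext_deriv2 cbasis (\<lambda>z a b. N (fst z) * (Omega a b + sigma C z a b)) (x, 0)
    (Inl i) (Inl j) (Inl k) = 0"
proof -
  have "pderiv (\<lambda>y. N (fst y) * (Omega (Inl b) (Inl c) + sigma C y (Inl b) (Inl c)))
      (x, 0) (cbasis (Inl a)) = 0" for a b c
    using assms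
    by (intro pderiv_eq_0_if_constant_on_line differentiable_conformal_Omega_sigma)
      (auto simp: Omega_def sigma_def cbasis_def)
  then show ?thesis by (simp add: ext_deriv2_def)
qed

lemma closed_form2_of_closed_conformal_Omega_sigma_plus_pullf:
  assumes "\<And>x. x \<in> U \<Longrightarrow> N differentiable (at x)"
    and "\<And>k i j x. x \<in> U \<Longrightarrow> C k i j differentiable (at x)"
    and "\<And>i j x. x \<in> U \<Longrightarrow> F i j differentiable (at x)"
    and closed: "closed_form2 (U \<times> UNIV) cbasis
      (\<lambda>z a b. N (fst z) * (Omega a b + sigma C z a b) + pullf F z a b)"
  shows "closed_form2 U xbasis (\<lambda>x i j. F i j x)"
proof -
  let ?w\<^sub>0 = "\<lambda>z a b. N (fst z) * (Omega a b + sigma C z a b)"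
  have "ext_deriv2 xbasis (\<lambda>x i j. F i j x) x i j k = 0" if "x \<in> U" for x i j k
  proof -
    have "0 = ext_deriv2 cbasis (\<lambda>z a b. ?w\<^sub>0 z a b + pullf F z a b) (x, 0) (Inl i) (Inl j) (Inl k)"
      using closed that by (simp add: closed_form2_iff_ext_deriv2)
    also have "\<dots> = ext_deriv2 cbasis ?w\<^sub>0 (x, 0) (Inl i) (Inl j) (Inl k)
        + ext_deriv2 cbasis (pullf F) (x, 0) (Inl i) (Inl j) (Inl k)"
      using that assms(1-3)
      by (intro ext_deriv2_add differentiable_conformal_Omega_sigma differentiable_pullf) simp_all
    also have "\<dots> = ext_deriv2 xbasis (\<lambda>x i j. F i j x) x i j k"
      using that assms(1-3)
      by (simp add: ext_deriv2_conformal_Omega_sigma_zero_section ext_deriv2_pullf_Inl)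
    finally show ?thesis by simp
  qed
  then show ?thesis by (simp add: closed_form2_iff_ext_deriv2)
qed

theorem proposition5p3:
  fixes U :: "(real^'n) set" and N :: "real^'n \<Rightarrow> real"
    and C :: "'n \<Rightarrow> 'n \<Rightarrow> 'n \<Rightarrow> real^'n \<Rightarrow> real"
    and f :: "'n \<Rightarrow> 'n \<Rightarrow> real^'n \<Rightarrow> real"
  assumes "open U"
    and "\<forall>x\<in>U. N x \<noteq> 0"
    and "\<forall>x\<in>U. N differentiable (at x)"
    and "\<forall>k i j. \<forall>x\<in>U. (\<lambda>y. C k i j y) differentiable (at x)"
    and "\<forall>k i j x. C k i j x = - C k j i x"
    and "\<forall>i j. \<forall>x\<in>U. (\<lambda>y. f i j y) differentiable (at x)"
    and "\<forall>i j x. f i j x = - f j i x"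
  shows "closed_form2 (U \<times> UNIV) cbasis
           (\<lambda>z a b. N (fst z) * (Omega a b + sigma C z a b + pullf f z a b))
         \<longleftrightarrow>
         closed_form2 (U \<times> UNIV) cbasis (\<lambda>z a b. N (fst z) * (Omega a b + sigma C z a b))
         \<and> closed_form2 U xbasis (\<lambda>x i j. N x * f i j x)"
proof -
  define F where "F = (\<lambda>i j x. N x * f i j x)"
  have dN: "\<And>x. x \<in> U \<Longrightarrow> N differentiable (at x)"
    and dC: "\<And>k i j x. x \<in> U \<Longrightarrow> C k i j differentiable (at x)"
    using assms(3,4) by auto
  have dF: "\<And>i j x. x \<in> U \<Longrightarrow> F i j differentiable (at x)"
    using assms(3,6) by (simp add: F_def differentiable_mult)
  have form_eq: "(\<lambda>z a b. N (fst z) * (Omega a b + sigma C z a b + pullf f z a b))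
      = (\<lambda>z a b. N (fst z) * (Omega a b + sigma C z a b) + pullf F z a b)"
    by (simp add: fun_eq_iff F_def pullf_def distrib_left split: sum.split)
  have "(\<lambda>x i j. N x * f i j x) = (\<lambda>x i j. F i j x)"
    by (simp add: F_def)
  moreover have "closed_form2 (U \<times> UNIV) cbasis
      (\<lambda>z a b. N (fst z) * (Omega a b + sigma C z a b) + pullf F z a b)
    \<longleftrightarrow> closed_form2 (U \<times> UNIV) cbasis (\<lambda>z a b. N (fst z) * (Omega a b + sigma C z a b))"
    if "closed_form2 U xbasis (\<lambda>x i j. F i j x)"
    using that dN dC dF closed_form2_pullf_iff[of U F]
    by (intro closed_form2_add_closed)
      (auto intro!: differentiable_conformal_Omega_sigma differentiable_pullf)
  ultimately show ?thesis
    unfolding form_eq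
    using closed_form2_of_closed_conformal_Omega_sigma_plus_pullf[OF dN dC dF] by auto
qed

end
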